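(* Let $\mathbf{u}$ be quasi-definite with SMOP $(P_n)_{n\ge0}$ satisfying $xP_n=P_{n+1}+b_nP_n+a_nP_{n-1}$, let $c\in\mathbb{C}$, and let $\widehat{\mathbf{u}}$ be a quasi-definite linear functional with $\mathbf{u}=(x-c)^2\widehat{\mathbf{u}}$ and SMOP $(Q_n)_{n\ge0}$. Write $Q_n=P_n+\sum_{m=0}^{n-1}\alpha_{n,m}P_m$ (then $\alpha_{n,m}=0$ for $m\le n-3$ and $\alpha_{n,n-2}\ne0$ for $n\ge2$), with the convention $\alpha_{0,-1}=0$. Then $(Q_n)$ satisfies $xQ_n=Q_{n+1}+\widehat b_nQ_n+\widehat a_nQ_{n-1}$, $Q_{-1}=0$, $Q_0=1$, where $$\widehat b_n=b_n+\alpha_{n,n-1}-\alpha_{n+1,n}\ (n\ge0),\qquad \widehat a_n=\frac{\alpha_{n,n-2}}{\alpha_{n-1,n-3}}\,a_{n-2}\ (n\ge3),$$ $$\widehat a_2=\frac{\mathbf{u}_0\widehat{\mathbf{u}}_0\,\alpha_{2,0}}{\mathbf{u}_0\widehat{\mathbf{u}}_0-(\widehat{\mathbf{u}}_1-c\widehat{\mathbf{u}}_0)^2},\qquad \widehat a_1=\frac{\mathbf{u}_0\widehat{\mathbf{u}}_0-(\widehat{\mathbf{u}}_1-c\widehat{\mathbf{u}}_0)^2}{\widehat{\mathbf{u}}_0^2}.$$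
   Context: Linear functionals on complex polynomials, moments $\mathbf{u}_n=\langle\mathbf{u},x^n\rangle$, $\langle(x-c)^2\widehat{\mathbf{u}},p\rangle=\langle\widehat{\mathbf{u}},(x-c)^2p\rangle$. Quasi-definite: all leading principal submatrices of the Hankel moment matrix are nonsingular; then there is a unique sequence of monic orthogonal polynomials (SMOP) $(P_n)$, $\deg P_n=n$, $\langle\mathbf{u},P_nP_m\rangle=K_n\delta_{nm}$, $K_n\neq0$, satisfying a three-term recurrence $xP_n=P_{n+1}+b_nP_n+a_nP_{n-1}$, $P_{-1}=0,P_0=1$, $a_n\ne0$. *)

theory Defs
  imports "HOL-Computational_Algebra.Polynomial" "Jordan_Normal_Form.Determinant"
begin

text \<open>A linear functional on complex polynomials is represented by its moment
sequence; its action on a polynomial p is the sum of coeff p i times the i-th moment.\<close>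
definition lf :: "(nat \<Rightarrow> complex) \<Rightarrow> complex poly \<Rightarrow> complex" where
  "lf u p = (\<Sum>i\<le>degree p. coeff p i * u i)"

definition hankel :: "(nat \<Rightarrow> complex) \<Rightarrow> nat \<Rightarrow> complex mat" where
  "hankel u n = mat (Suc n) (Suc n) (\<lambda>(i, j). u (i + j))"

definition quasi_definite :: "(nat \<Rightarrow> complex) \<Rightarrow> bool" where
  "quasi_definite u \<longleftrightarrow> (\<forall>n. det (hankel u n) \<noteq> 0)"

definition is_SMOP :: "(nat \<Rightarrow> complex) \<Rightarrow> (nat \<Rightarrow> complex poly) \<Rightarrow> bool" where
  "is_SMOP u P \<longleftrightarrow>
     (\<forall>n. degree (P n) = n \<and> lead_coeff (P n) = 1) \<and>
     (\<forall>n m. n \<noteq> m \<longrightarrow> lf u (P n * P m) = 0) \<and>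
     (\<forall>n. lf u (P n * P n) \<noteq> 0)"

end

(*
  Every SMOP satisfies a three-term recurrence x R_n = R_(n+1) + b_n R_n + a_n R_(n-1) in which
  b_n is the difference of the subdiagonal coefficients of x R_n and R_(n+1), and
  a_n = K_n / K_(n-1) is a ratio of consecutive norms K_n = <w, R_n^2>. Comparing subdiagonal
  coefficients in Q_n = P_n + sum alpha_(n,m) P_m gives the formula for the b-coefficients of Q.
  For the norms, alpha_(n,m) K_m = <u, P_m Q_n> = <uh, Q_n (x - c)^2 P_m>; since (x - c)^2 P_m is
  monic of degree m + 2, this vanishes for m + 2 < n and equals the norm of Q_n for m = n - 2.
  Thus Kh_n = alpha_(n,n-2) K_(n-2), which gives the a-coefficients of Q for n >= 3; the cases
  n = 1, 2 use the 2x2 Hankel determinant Kh_1 uh_0 = uh_0 uh_2 - uh_1^2.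
*)
theory Submission
  imports Defs
begin

lemma lf_eq_sum_atMost:
  assumes "degree p \<le> N"
  shows "lf w p = (\<Sum>i\<le>N. coeff p i * w i)"
  unfolding lf_def
  by (rule sum.mono_neutral_left) (use assms in \<open>auto simp: coeff_eq_0\<close>)

lemma lf_add: "lf w (p + q) = lf w p + lf w q"
proof -
  let ?N = "max (degree p) (degree q)"
  have "degree (p + q) \<le> ?N" by (rule degree_add_le) auto
  then show ?thesis
    by (simp add: lf_eq_sum_atMost[of _ ?N] lf_eq_sum_atMost[of p ?N] lf_eq_sum_atMost[of q ?N]
        sum.distrib algebra_simps)
qed

lemma lf_smult: "lf w (smult a p) = a * lf w p"
  by (simp add: lf_eq_sum_atMost[of "smult a p" "degree p"] lf_eq_sum_atMost[of p "degree p"]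
      sum_distrib_left algebra_simps)

lemma lf_0 [simp]: "lf w 0 = 0"
  by (simp add: lf_def)

lemma lf_1 [simp]: "lf w 1 = w 0"
  by (simp add: lf_def)

lemma lf_diff: "lf w (p - q) = lf w p - lf w q"
  using lf_add[of w p "smult (-1) q"] lf_smult[of w "-1" q] by simp

lemma lf_sum: "lf w (\<Sum>k\<in>A. f k) = (\<Sum>k\<in>A. lf w (f k))"
  by (induction A rule: infinite_finite_induct) (auto simp: lf_add)

lemma lf_pCons: "lf w (pCons a p) = a * w 0 + lf (\<lambda>i. w (Suc i)) p"
proof -
  have "degree (pCons a p) \<le> Suc (degree p)" by (simp add: degree_pCons_le)
  then have "lf w (pCons a p) = (\<Sum>i\<le>Suc (degree p). coeff (pCons a p) i * w i)"
    by (rule lf_eq_sum_atMost)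
  also have "\<dots> = a * w 0 + (\<Sum>i\<le>degree p. coeff p i * w (Suc i))"
    by (subst sum.atMost_Suc_shift) simp
  finally show ?thesis by (simp add: lf_def)
qed

lemma monic_degree_0_eq_1: "degree p = 0 \<Longrightarrow> lead_coeff p = 1 \<Longrightarrow> p = 1"
  by (metis degree_0_id one_pCons)

lemma monic_basis_span:
  fixes R :: "nat \<Rightarrow> 'a::comm_ring_1 poly"
  assumes R: "\<And>k. degree (R k) = k" "\<And>k. lead_coeff (R k) = 1"
  shows "degree p \<le> n \<Longrightarrow> \<exists>c. p = (\<Sum>k\<le>n. smult (c k) (R k))"
proof (induction n arbitrary: p)
  case 0
  then have "R 0 = 1" "p = [:coeff p 0:]"
    using monic_degree_0_eq_1[OF R(1)[of 0] R(2)[of 0]] by (auto simp: degree_0_id)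
  then show ?case by (intro exI[of _ "\<lambda>_. coeff p 0"]) (simp add: one_pCons)
next
  case (Suc n)
  define r where "r = p - smult (coeff p (Suc n)) (R (Suc n))"
  have "degree r \<le> n"
  proof (rule degree_le, intro allI impI)
    fix i assume "n < i"
    then consider "i = Suc n" | "i > Suc n" by linarith
    then show "coeff r i = 0"
      by cases (use R Suc.prems in \<open>auto simp: r_def coeff_eq_0\<close>)
  qed
  from Suc.IH[OF this] obtain c where c: "r = (\<Sum>k\<le>n. smult (c k) (R k))" by blast
  show ?case
    by (intro exI[of _ "c(Suc n := coeff p (Suc n))"]) (simp add: c[unfolded r_def, symmetric])
qed

lemma degree_shift_minus_next_le:
  fixes R :: "nat \<Rightarrow> 'a::comm_ring_1 poly"
  assumes R: "\<And>k. degree (R k) = k" "\<And>k. lead_coeff (R k) = 1"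
  shows "degree ([:0, 1:] * R n - R (Suc n)) \<le> n"
proof (rule degree_le, intro allI impI)
  fix i assume "n < i"
  then consider "i = Suc n" | j where "i = Suc j" "j > n" by (cases i) (auto simp: less_Suc_eq)
  then show "coeff ([:0, 1:] * R n - R (Suc n)) i = 0"
    by cases (use R in \<open>auto simp: coeff_eq_0\<close>)
qed

lemma recurrence_diag_coeff:
  fixes R :: "nat \<Rightarrow> 'a::comm_ring_1 poly"
  assumes R: "\<And>k. degree (R k) = k" "\<And>k. lead_coeff (R k) = 1"
    and rec: "[:0, 1:] * R n = R (Suc n) + smult \<beta> (R n)
                + (if n = 0 then 0 else smult \<gamma> (R (n - 1)))"
  shows "\<beta> = coeff (pCons 0 (R n)) n - coeff (R (Suc n)) n"
proof -
  have "coeff (R (n - 1)) n = 0" if "n \<noteq> 0" using that R by (simp add: coeff_eq_0)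
  moreover have "coeff (R n) n = 1" using R by metis
  ultimately have "coeff (pCons 0 (R n)) n = coeff (R (Suc n)) n + \<beta>"
    using arg_cong[OF rec, of "\<lambda>p. coeff p n"] by (simp split: if_splits)
  then show ?thesis by simp
qed

lemma expansion_subdiag_coeff:
  fixes P Q :: "nat \<Rightarrow> 'a::comm_ring_1 poly"
  assumes P: "\<And>k. degree (P k) = k" "\<And>k. lead_coeff (P k) = 1"
    and expan: "Q (Suc k) = P (Suc k) + (\<Sum>m<Suc k. smult (\<alpha> m) (P m))"
  shows "coeff (Q (Suc k)) k = coeff (P (Suc k)) k + \<alpha> k"
proof -
  have "(\<Sum>m<k. \<alpha> m * coeff (P m) k) = 0"
    using P by (intro sum.neutral) (auto simp: coeff_eq_0)
  moreover have "coeff (P k) k = 1" using P by metis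
  ultimately show ?thesis by (simp add: expan coeff_sum)
qed

lemma smop_degree: "is_SMOP w R \<Longrightarrow> degree (R n) = n"
  unfolding is_SMOP_def by blast

lemma smop_lead_coeff: "is_SMOP w R \<Longrightarrow> lead_coeff (R n) = 1"
  unfolding is_SMOP_def by blast

lemma smop_orthogonal: "is_SMOP w R \<Longrightarrow> n \<noteq> m \<Longrightarrow> lf w (R n * R m) = 0"
  unfolding is_SMOP_def by blast

lemma smop_norm_nonzero: "is_SMOP w R \<Longrightarrow> lf w (R n * R n) \<noteq> 0"
  unfolding is_SMOP_def by blast

lemma smop_0: "is_SMOP w R \<Longrightarrow> R 0 = 1"
  using monic_degree_0_eq_1 smop_degree smop_lead_coeff by blast

lemma smop_orthogonal_lower_degree:
  assumes S: "is_SMOP w R" and "degree q < n"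
  shows "lf w (R n * q) = 0"
proof -
  obtain m where n: "n = Suc m" using assms(2) by (cases n) auto
  obtain c where c: "q = (\<Sum>k\<le>m. smult (c k) (R k))"
    using monic_basis_span[of R q m] smop_degree[OF S] smop_lead_coeff[OF S] assms(2) n by auto
  have "lf w (R n * q) = (\<Sum>k\<le>m. c k * lf w (R n * R k))"
    by (simp add: c sum_distrib_left mult_smult_right lf_sum lf_smult)
  also have "\<dots> = 0" using smop_orthogonal[OF S] n by (intro sum.neutral) auto
  finally show ?thesis .
qed

lemma smop_fourier_expansion:
  assumes S: "is_SMOP w R" and "degree r \<le> n"
  shows "r = (\<Sum>k\<le>n. smult (lf w (r * R k) / lf w (R k * R k)) (R k))"
proof -
  obtain c where c: "r = (\<Sum>k\<le>n. smult (c k) (R k))"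
    using monic_basis_span[of R r n] smop_degree[OF S] smop_lead_coeff[OF S] assms(2) by auto
  have "c j = lf w (r * R j) / lf w (R j * R j)" if "j \<le> n" for j
  proof -
    have "lf w (r * R j) = (\<Sum>k\<le>n. c k * lf w (R k * R j))"
      by (simp add: c sum_distrib_right lf_sum lf_smult)
    also have "\<dots> = (\<Sum>k\<le>n. if k = j then c j * lf w (R j * R j) else 0)"
      using smop_orthogonal[OF S] by (intro sum.cong) auto
    also have "\<dots> = c j * lf w (R j * R j)" using that by simp
    finally show ?thesis using smop_norm_nonzero[OF S, of j] by simp
  qed
  then show ?thesis by (subst c) (intro sum.cong; simp)
qed

lemma smop_pairing_monic:
  assumes S: "is_SMOP w R" and "degree p = n" and "lead_coeff p = 1"
  shows "lf w (R n * p) = lf w (R n * R n)"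
proof -
  have "lf w (R n * (p - R n)) = 0"
  proof (cases "p - R n = 0")
    case False
    have "coeff (p - R n) n = 0" using assms smop_degree[OF S] smop_lead_coeff[OF S] by simp
    then have "degree (p - R n) \<noteq> n" using False by (metis leading_coeff_0_iff)
    moreover have "degree (p - R n) \<le> n"
      using degree_diff_le[of p n "R n"] assms smop_degree[OF S] by simp
    ultimately show ?thesis by (intro smop_orthogonal_lower_degree[OF S]) simp
  qed simp
  then show ?thesis by (simp add: right_diff_distrib lf_diff)
qed

lemma smop_pairing_shift_prev:
  assumes S: "is_SMOP w R" and "n \<ge> 1"
  shows "lf w (R n * ([:0, 1:] * R (n - 1))) = lf w (R n * R n)"
proof -
  obtain m where n: "n = Suc m" using assms(2) by (cases n) auto
  have "R m \<noteq> 0" using smop_lead_coeff[OF S, of m] by auto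
  then have "degree ([:0, 1:] * R m) = Suc m" "lead_coeff ([:0, 1:] * R m) = 1"
    using smop_degree[OF S, of m] smop_lead_coeff[OF S, of m] by simp_all
  then show ?thesis
    unfolding n diff_Suc_1 by (rule smop_pairing_monic[OF S])
qed

lemma smop_three_term_recurrence:
  assumes S: "is_SMOP w R"
  shows "[:0, 1:] * R n = R (Suc n)
           + smult (lf w ([:0, 1:] * R n * R n) / lf w (R n * R n)) (R n)
           + (if n = 0 then 0
              else smult (lf w (R n * R n) / lf w (R (n - 1) * R (n - 1))) (R (n - 1)))"
proof -
  let ?r = "[:0, 1:] * R n - R (Suc n)"
  define d where "d k = lf w (?r * R k) / lf w (R k * R k)" for k
  have pair: "lf w (?r * R k) = lf w (R n * ([:0, 1:] * R k)) - lf w (R (Suc n) * R k)" for k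
    by (simp add: left_diff_distrib lf_diff)
  have low: "d k = 0" if "k + 1 < n" for k
  proof -
    have "R k \<noteq> 0" using smop_lead_coeff[OF S, of k] by auto
    then have "lf w (R n * ([:0, 1:] * R k)) = 0"
      using that smop_degree[OF S] by (intro smop_orthogonal_lower_degree[OF S]) simp
    then show ?thesis unfolding d_def pair using that smop_orthogonal[OF S] by simp
  qed
  have "?r = (\<Sum>k\<le>n. smult (d k) (R k))"
    unfolding d_def
    by (rule smop_fourier_expansion[OF S degree_shift_minus_next_le])
       (use smop_degree[OF S] smop_lead_coeff[OF S] in auto)
  then have expand: "[:0, 1:] * R n = R (Suc n) + (\<Sum>k\<le>n. smult (d k) (R k))"
    by (metis diff_eq_eq add.commute)
  have diag: "d n = lf w ([:0, 1:] * R n * R n) / lf w (R n * R n)"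
    unfolding d_def pair using smop_orthogonal[OF S, of "Suc n" n] by simp
  show ?thesis
  proof (cases n)
    case 0
    then show ?thesis using expand diag by (simp del: mult_pCons_left)
  next
    case (Suc m)
    have "d m = lf w (R n * R n) / lf w (R m * R m)"
      unfolding d_def pair
      using smop_pairing_shift_prev[OF S, of n] smop_orthogonal[OF S, of "Suc n" m] Suc by simp
    moreover have "(\<Sum>k<m. smult (d k) (R k)) = 0"
      using low Suc by (intro sum.neutral) auto
    moreover have "(\<Sum>k\<le>n. smult (d k) (R k))
        = (\<Sum>k<m. smult (d k) (R k)) + smult (d m) (R m) + smult (d n) (R n)"
      using Suc by (simp add: lessThan_Suc_atMost[symmetric] del: lessThan_Suc_atMost)
    ultimately show ?thesis using expand diag Suc by (simp add: algebra_simps del: mult_pCons_left)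
  qed
qed

lemma smop_recurrence_subdiag:
  assumes S: "is_SMOP w R" and "n \<ge> 1"
    and rec: "[:0, 1:] * R n = R (Suc n) + smult \<beta> (R n) + smult \<gamma> (R (n - 1))"
  shows "\<gamma> * lf w (R (n - 1) * R (n - 1)) = lf w (R n * R n)"
proof -
  have "lf w ([:0, 1:] * R n * R (n - 1)) = \<gamma> * lf w (R (n - 1) * R (n - 1))"
    unfolding rec using assms(2) smop_orthogonal[OF S, of "Suc n" "n - 1"]
      smop_orthogonal[OF S, of n "n - 1"]
    by (simp add: distrib_right lf_add lf_smult)
  moreover have "lf w ([:0, 1:] * R n * R (n - 1)) = lf w (R n * R n)"
    using smop_pairing_shift_prev[OF S assms(2)] by (simp add: mult_ac)
  ultimately show ?thesis by simp
qed

lemma smop_norm_1: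
  assumes S: "is_SMOP w R"
  shows "lf w (R 1 * R 1) * w 0 = w 0 * w 2 - w 1 ^ 2"
proof -
  obtain q a where "R 1 = [:q, a:]" "a \<noteq> 0"
    using degree1_coeffs[OF smop_degree[OF S, of 1]] by blast
  with smop_lead_coeff[OF S, of 1] have R1: "R 1 = [:q, 1:]" by simp
  have "lf w (R 1) = 0" using smop_orthogonal[OF S, of 1 0] smop_0[OF S] by simp
  then have orth: "q * w 0 + w 1 = 0" unfolding R1 by (simp add: lf_pCons)
  have "lf w (R 1 * R 1) = lf w (R 1 * [:0, 1:])"
    using smop_pairing_shift_prev[OF S, of 1] smop_0[OF S] by simp
  also have "\<dots> = q * w 1 + w 2" unfolding R1 by (simp add: lf_pCons numeral_eq_Suc)
  finally have norm: "lf w (R 1 * R 1) = q * w 1 + w 2" .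
  have "w 1 = - (q * w 0)" using orth by (simp add: eq_neg_iff_add_eq_0 add.commute)
  then show ?thesis unfolding norm by (simp add: power2_eq_square algebra_simps)
qed

lemma expansion_coeff_pairing:
  assumes S: "is_SMOP w P" and expan: "q = P n + (\<Sum>m<n. smult (\<alpha> m) (P m))" and "j < n"
  shows "lf w (P j * q) = \<alpha> j * lf w (P j * P j)"
proof -
  have "lf w (P j * q) = lf w (P j * P n) + (\<Sum>m<n. \<alpha> m * lf w (P j * P m))"
    by (simp add: expan distrib_left sum_distrib_left mult_smult_right lf_add lf_sum lf_smult)
  also have "(\<Sum>m<n. \<alpha> m * lf w (P j * P m))
      = (\<Sum>m<n. if m = j then \<alpha> j * lf w (P j * P j) else 0)"
    using smop_orthogonal[OF S] by (intro sum.cong) auto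
  finally show ?thesis using smop_orthogonal[OF S, of j n] assms(3) by simp
qed

lemma expansion_recurrence_diag:
  fixes P Q :: "nat \<Rightarrow> 'a::comm_ring_1 poly"
  assumes P: "\<And>k. degree (P k) = k" "\<And>k. lead_coeff (P k) = 1"
    and Q: "\<And>k. degree (Q k) = k" "\<And>k. lead_coeff (Q k) = 1"
    and expan: "\<And>k. Q k = P k + (\<Sum>m<k. smult (\<alpha> k m) (P m))"
    and rec_P: "[:0, 1:] * P n = P (Suc n) + smult \<beta> (P n)
                  + (if n = 0 then 0 else smult \<gamma> (P (n - 1)))"
    and rec_Q: "[:0, 1:] * Q n = Q (Suc n) + smult \<beta>' (Q n)
                  + (if n = 0 then 0 else smult \<gamma>' (Q (n - 1)))"
  shows "\<beta>' = \<beta> + (if n = 0 then 0 else \<alpha> n (n - 1)) - \<alpha> (Suc n) n"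
proof -
  have subdiag: "coeff (Q (Suc k)) k = coeff (P (Suc k)) k + \<alpha> (Suc k) k" for k
    using P expan by (rule expansion_subdiag_coeff)
  have "\<beta>' = coeff (pCons 0 (Q n)) n - coeff (Q (Suc n)) n"
    using Q rec_Q by (rule recurrence_diag_coeff)
  moreover have "\<beta> = coeff (pCons 0 (P n)) n - coeff (P (Suc n)) n"
    using P rec_P by (rule recurrence_diag_coeff)
  ultimately show ?thesis
    using Q P by (cases n) (simp_all add: subdiag)
qed

context
  fixes u uh :: "nat \<Rightarrow> complex" and P Q :: "nat \<Rightarrow> complex poly" and D :: "complex poly"
    and \<alpha> :: "nat \<Rightarrow> complex"
  assumes smop_P: "is_SMOP u P" and smop_Q: "is_SMOP uh Q"
    and degree_D: "degree D = 2" and lead_coeff_D: "lead_coeff D = 1"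
    and rel: "\<And>p. lf u p = lf uh (D * p)"
begin

lemma pairing_through_multiplier:
  assumes expan: "Q n = P n + (\<Sum>m<n. smult (\<alpha> m) (P m))" and "j < n"
  shows "lf uh (Q n * (D * P j)) = \<alpha> j * lf u (P j * P j)"
  using expansion_coeff_pairing[OF smop_P expan assms(2)] by (simp add: rel mult_ac)

lemma multiplier_times_P_monic: "degree (D * P j) = j + 2" "lead_coeff (D * P j) = 1"
proof -
  have "P j \<noteq> 0" using smop_lead_coeff[OF smop_P, of j] by auto
  moreover have "D \<noteq> 0" using lead_coeff_D by auto
  ultimately show "degree (D * P j) = j + 2"
    using degree_mult_eq[of D "P j"] degree_D smop_degree[OF smop_P] by simp
  show "lead_coeff (D * P j) = 1"
    by (simp add: lead_coeff_mult lead_coeff_D smop_lead_coeff[OF smop_P])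
qed

lemma expansion_coeff_vanish:
  assumes expan: "Q n = P n + (\<Sum>m<n. smult (\<alpha> m) (P m))" and "m + 3 \<le> n"
  shows "\<alpha> m = 0"
proof -
  have "lf uh (Q n * (D * P m)) = 0"
    using assms(2) multiplier_times_P_monic by (intro smop_orthogonal_lower_degree[OF smop_Q]) simp
  then show ?thesis
    using pairing_through_multiplier[OF expan] assms(2) smop_norm_nonzero[OF smop_P, of m] by simp
qed

lemma norm_eq_subsubdiag_expansion_coeff:
  assumes expan: "Q n = P n + (\<Sum>m<n. smult (\<alpha> m) (P m))" and "n \<ge> 2"
  shows "lf uh (Q n * Q n) = \<alpha> (n - 2) * lf u (P (n - 2) * P (n - 2))"
proof -
  have "lf uh (Q n * Q n) = lf uh (Q n * (D * P (n - 2)))"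
    using assms(2) multiplier_times_P_monic
    by (intro smop_pairing_monic[OF smop_Q, symmetric]) auto
  also have "\<dots> = \<alpha> (n - 2) * lf u (P (n - 2) * P (n - 2))"
    using assms(2) by (intro pairing_through_multiplier[OF expan]) simp
  finally show ?thesis .
qed

end

lemma multiplier_low_moments:
  assumes S: "is_SMOP uh Q" and rel: "\<And>p. lf u p = lf uh ([:- c, 1:] ^ 2 * p)"
  shows "u 0 * uh 0 - (uh 1 - c * uh 0) ^ 2 = lf uh (Q 1 * Q 1) * uh 0"
proof -
  have "u 0 = lf uh ([:- c, 1:] ^ 2)" using rel[of 1] by simp
  also have "\<dots> = c ^ 2 * uh 0 - 2 * c * uh 1 + uh 2"
    by (simp add: lf_pCons numeral_eq_Suc power2_eq_square algebra_simps)
  finally have u0: "u 0 = c ^ 2 * uh 0 - 2 * c * uh 1 + uh 2" .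
  show ?thesis
    unfolding u0 smop_norm_1[OF S] by (simp add: power2_eq_square algebra_simps)
qed

theorem mainTheorem4:
  fixes u uh :: "nat \<Rightarrow> complex" and P Q :: "nat \<Rightarrow> complex poly"
    and a b :: "nat \<Rightarrow> complex" and c :: complex and \<alpha> :: "nat \<Rightarrow> nat \<Rightarrow> complex"
  assumes qd_u: "quasi_definite u" and smop_P: "is_SMOP u P"
    and rec_P: "\<forall>n. [:0, 1:] * P n = P (Suc n) + smult (b n) (P n)
                       + (if n = 0 then 0 else smult (a n) (P (n - 1)))"
    and a_nz: "\<forall>n\<ge>1. a n \<noteq> 0"
    and qd_uh: "quasi_definite uh" and smop_Q: "is_SMOP uh Q"
    and rel: "\<forall>p. lf u p = lf uh ([:- c, 1:] ^ 2 * p)"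
    and expan: "\<forall>n. Q n = P n + (\<Sum>m<n. smult (\<alpha> n m) (P m))"
  shows "(\<forall>n m. m + 3 \<le> n \<longrightarrow> \<alpha> n m = 0) \<and> (\<forall>n\<ge>2. \<alpha> n (n - 2) \<noteq> 0) \<and>
    (\<exists>ah bh. (\<forall>n. [:0, 1:] * Q n = Q (Suc n) + smult (bh n) (Q n)
                     + (if n = 0 then 0 else smult (ah n) (Q (n - 1))))
       \<and> (\<forall>n. bh n = b n + (if n = 0 then 0 else \<alpha> n (n - 1)) - \<alpha> (Suc n) n)
       \<and> (\<forall>n\<ge>3. ah n = \<alpha> n (n - 2) / \<alpha> (n - 1) (n - 3) * a (n - 2))
       \<and> ah 2 = u 0 * uh 0 * \<alpha> 2 0 / (u 0 * uh 0 - (uh 1 - c * uh 0) ^ 2)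
       \<and> ah 1 = (u 0 * uh 0 - (uh 1 - c * uh 0) ^ 2) / (uh 0) ^ 2)"
proof -
  define K where "K n = lf u (P n * P n)" for n
  define Kh where "Kh n = lf uh (Q n * Q n)" for n
  define bh where "bh n = lf uh ([:0, 1:] * Q n * Q n) / Kh n" for n
  define ah where "ah n = Kh n / Kh (n - 1)" for n
  have D: "degree ([:- c, 1:] ^ 2) = 2" "lead_coeff ([:- c, 1:] ^ 2) = 1"
    using lead_coeff_power[of "[:- c, 1:]" 2] by (simp_all add: degree_linear_power)
  note multiplier = smop_P smop_Q D rel[rule_format]
  have vanish: "\<alpha> n m = 0" if "m + 3 \<le> n" for n m
    using expansion_coeff_vanish[OF multiplier expan[rule_format] that] .
  have norm: "Kh n = \<alpha> n (n - 2) * K (n - 2)" if "n \<ge> 2" for n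
    using norm_eq_subsubdiag_expansion_coeff[OF multiplier expan[rule_format] that]
    by (simp add: K_def Kh_def)
  have Kh_nz: "Kh n \<noteq> 0" and K_nz: "K n \<noteq> 0" for n
    using smop_norm_nonzero smop_P smop_Q by (auto simp: K_def Kh_def)
  have rec_Q: "[:0, 1:] * Q n = Q (Suc n) + smult (bh n) (Q n)
                 + (if n = 0 then 0 else smult (ah n) (Q (n - 1)))" for n
    unfolding ah_def bh_def Kh_def by (rule smop_three_term_recurrence[OF smop_Q])
  have a_norm: "a n * K (n - 1) = K n" if "n \<ge> 1" for n
    using smop_recurrence_subdiag[OF smop_P that] rec_P that by (simp add: K_def)
  have uh0: "uh 0 = Kh 0" by (simp add: Kh_def smop_0[OF smop_Q])
  have gap: "u 0 * uh 0 - (uh 1 - c * uh 0) ^ 2 = Kh 1 * uh 0"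
    using multiplier_low_moments[OF smop_Q rel[rule_format]] by (simp add: Kh_def)
  have "\<alpha> n (n - 2) \<noteq> 0" if "n \<ge> 2" for n
    using norm[OF that] Kh_nz[of n] by auto
  moreover have "ah n = \<alpha> n (n - 2) / \<alpha> (n - 1) (n - 3) * a (n - 2)" if "n \<ge> 3" for n
    using that norm[of n] norm[of "n - 1"] a_norm[of "n - 2"] K_nz[of "n - 3"] Kh_nz[of "n - 1"]
    by (simp add: ah_def numeral_eq_Suc field_simps)
  moreover have "bh n = b n + (if n = 0 then 0 else \<alpha> n (n - 1)) - \<alpha> (Suc n) n" for n
    by (rule expansion_recurrence_diag[OF smop_degree[OF smop_P] smop_lead_coeff[OF smop_P]
          smop_degree[OF smop_Q] smop_lead_coeff[OF smop_Q] expan[rule_format] rec_P[rule_format] rec_Q])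
  moreover have "ah 2 = u 0 * uh 0 * \<alpha> 2 0 / (u 0 * uh 0 - (uh 1 - c * uh 0) ^ 2)"
    unfolding gap using norm[of 2] Kh_nz[of 0] by (simp add: ah_def K_def smop_0[OF smop_P] uh0)
  moreover have "ah 1 = (u 0 * uh 0 - (uh 1 - c * uh 0) ^ 2) / (uh 0) ^ 2"
    unfolding gap using Kh_nz[of 0] by (simp add: ah_def uh0 power2_eq_square)
  ultimately show ?thesis
    using vanish rec_Q by blast
qed

end
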